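(* For every $k\in\omega$ and $\xi<\omega_1$, the sets $\mathcal{D}(k)=\{p\in\mathbb{P}: n^p\ge k\text{ and }k\in s^p\}$ and $\mathcal{E}(\xi)=\{p\in\mathbb{P}:\xi\in v^p\}$ are dense in the forcing notion $\mathbb{P}$ defined below.
   Context: For $n\in\omega$, $2^n$ is the set of $0$-$1$ sequences of length $n$, with metric $d(\eta,\eta')=2^{-k}$ for $\eta\ne\eta'$, where $k$ is least with $\eta\restriction k\neq\eta'\restriction k$. Let $\mathbb{L}_1(n)$ be the set of all $1$-Lipschitz functions $g\colon 2^n\to 2^n$. For a set $A$, $[A]^2$ denotes the set of $2$-element subsets of $A$, and $[A]^{<\omega}$ the finite subsets; $\rho(\alpha,\beta)$ means $\rho(\{\alpha,\beta\})$. A condition $p\in\mathbb{P}$ is a tuple $p=(n^p,s^p,v^p,\mathcal{F}^p,\gamma^p,\rho^p)$ such that: (1) $n^p\in\omega$, $s^p\in[\omega]^{<\omega}$, $v^p\in[\omega_1]^{<\omega}$; (2) $\mathcal{F}^p=\{f^p_i: i\in s^p\}\subseteq\mathbb{L}_1(n^p)$ and $\rho^p\colon[v^p]^2\to s^p$; (2') $\rho^p(\alpha,\beta)\neq\rho^p(\alpha',\beta)$ whenever $\alpha<\alpha'<\beta$; (3) $\gamma^p\colon v^p\to 2^{n^p}$ is one-to-one; (4) $\gamma^p(\alpha)=f^p_{\rho^p(\alpha,\beta)}(\gamma^p(\beta))$ whenever $\alpha<\beta$ are in $v^p$. The order: $p\le q$ ($q$ is stronger) iff (5) $n^p\le n^q$,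 $s^p\subseteq s^q$, $v^p\subseteq v^q$; (6) $f^q_i(\eta)\restriction n^p=f^p_i(\eta\restriction n^p)$ for each $i\in s^p$ and every $\eta\in 2^{n^q}$; (7) $\gamma^q(\alpha)\restriction n^p=\gamma^p(\alpha)$ for every $\alpha\in v^p$; (8) $\rho^q\restriction[v^p]^2=\rho^p$. A set $D\subseteq\mathbb{P}$ is dense if for every $p\in\mathbb{P}$ there is $q\in D$ with $p\le q$. *)

theory Defs
  imports Complex_Main "HOL-Library.Countable_Set"
begin

text \<open>2^n : 0-1 sequences of length n, as boolean lists.\<close>
definition bits :: "nat \<Rightarrow> bool list set" where
  "bits n = {\<eta>. length \<eta> = n}"

definition seq_dist :: "bool list \<Rightarrow> bool list \<Rightarrow> real" where
  "seq_dist \<eta> \<eta>' = (if \<eta> = \<eta>' then 0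
     else (1/2) ^ (LEAST k. take k \<eta> \<noteq> take k \<eta>'))"

definition Lip1 :: "nat \<Rightarrow> (bool list \<Rightarrow> bool list) \<Rightarrow> bool" where
  "Lip1 n g \<longleftrightarrow> (\<forall>\<eta>\<in>bits n. g \<eta> \<in> bits n) \<and>
     (\<forall>\<eta>\<in>bits n. \<forall>\<eta>'\<in>bits n. seq_dist (g \<eta>) (g \<eta>') \<le> seq_dist \<eta> \<eta>')"

text \<open>A tuple (n, s, v, F = {f_i : i in s}, gamma, rho); rho is applied to 2-element sets.\<close>
record 'a cond =
  cn :: nat
  cs :: "nat set"
  cv :: "'a set"
  cf :: "nat \<Rightarrow> bool list \<Rightarrow> bool list"
  cgamma :: "'a \<Rightarrow> bool list"
  crho :: "'a set \<Rightarrow> nat"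

definition isCond :: "('a::linorder) cond \<Rightarrow> bool" where
  "isCond p \<longleftrightarrow>
     finite (cs p) \<and> finite (cv p) \<and>
     (\<forall>i\<in>cs p. Lip1 (cn p) (cf p i)) \<and>
     (\<forall>\<alpha>\<in>cv p. \<forall>\<beta>\<in>cv p. \<alpha> \<noteq> \<beta> \<longrightarrow> crho p {\<alpha>, \<beta>} \<in> cs p) \<and>
     (\<forall>\<alpha>\<in>cv p. \<forall>\<alpha>'\<in>cv p. \<forall>\<beta>\<in>cv p. \<alpha> < \<alpha>' \<and> \<alpha>' < \<beta> \<longrightarrow>
         crho p {\<alpha>, \<beta>} \<noteq> crho p {\<alpha>', \<beta>}) \<and>
     inj_on (cgamma p) (cv p) \<and> (\<forall>\<alpha>\<in>cv p. cgamma p \<alpha> \<in> bits (cn p)) \<and>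
     (\<forall>\<alpha>\<in>cv p. \<forall>\<beta>\<in>cv p. \<alpha> < \<beta> \<longrightarrow>
         cgamma p \<alpha> = cf p (crho p {\<alpha>, \<beta>}) (cgamma p \<beta>))"

definition Pforce :: "('a::linorder) cond set" where
  "Pforce = {p. isCond p}"

text \<open>p \<le> q : q is stronger.\<close>
definition cond_le :: "('a::linorder) cond \<Rightarrow> 'a cond \<Rightarrow> bool" where
  "cond_le p q \<longleftrightarrow>
     cn p \<le> cn q \<and> cs p \<subseteq> cs q \<and> cv p \<subseteq> cv q \<and>
     (\<forall>i\<in>cs p. \<forall>\<eta>\<in>bits (cn q). take (cn p) (cf q i \<eta>) = cf p i (take (cn p) \<eta>)) \<and>
     (\<forall>\<alpha>\<in>cv p. take (cn p) (cgamma q \<alpha>) = cgamma p \<alpha>) \<and>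
     (\<forall>\<alpha>\<in>cv p. \<forall>\<beta>\<in>cv p. \<alpha> \<noteq> \<beta> \<longrightarrow> crho q {\<alpha>, \<beta>} = crho p {\<alpha>, \<beta>})"

definition dense_in_P :: "('a::linorder) cond set \<Rightarrow> bool" where
  "dense_in_P D \<longleftrightarrow> D \<subseteq> Pforce \<and> (\<forall>p\<in>Pforce. \<exists>q\<in>D. cond_le p q)"

definition Dset :: "nat \<Rightarrow> ('a::linorder) cond set" where
  "Dset k = {p \<in> Pforce. cn p \<ge> k \<and> k \<in> cs p}"

definition Eset :: "'a::linorder \<Rightarrow> 'a cond set" where
  "Eset \<xi> = {p \<in> Pforce. \<xi> \<in> cv p}"

end

theory Submission
  imports Defs
begin

text \<open>
  A condition can be strengthened in three ways that preserve all its requirements: raise the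
  height n by padding every sequence with zeros; add a fresh colour carrying a constant, hence
  1-Lipschitz, function; and add a new point \<xi> coded by 0\<dots>01, which differs from all the padded
  old codes in its last bit. When \<xi> is added, every pair {\<alpha>, \<xi>} receives its own fresh colour
  whose function is constant with value the code of the smaller point, so (2') and (4) hold for
  the new pairs trivially.
\<close>

lemma seq_dist_append_same_length:
  assumes "length a = length b"
  shows "seq_dist (a @ c) (b @ c) = seq_dist a b"
  using assms by (simp add: seq_dist_def take_append)

lemma seq_dist_take_le: "seq_dist (take n x) (take n y) \<le> seq_dist x y"
proof (cases "take n x = take n y")
  case True
  then show ?thesis by (simp add: seq_dist_def)
next
  case False
  let ?K = "LEAST k. take k x \<noteq> take k y"
  let ?K' = "LEAST k. take k (take n x) \<noteq> take k (take n y)"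
  have "take ?K' (take n x) \<noteq> take ?K' (take n y)"
    by (rule LeastI[where k = n]) (use False in simp)
  then have "take (min ?K' n) x \<noteq> take (min ?K' n) y"
    by (simp add: min.commute)
  then have "?K \<le> min ?K' n"
    by (rule Least_le)
  then have "?K \<le> ?K'"
    by simp
  then have "(1 / 2 :: real) ^ ?K' \<le> (1 / 2) ^ ?K"
    by (rule power_decreasing) auto
  with False show ?thesis
    by (auto simp: seq_dist_def)
qed

lemma Lip1_const: "c \<in> bits N \<Longrightarrow> Lip1 N (\<lambda>_. c)"
  by (simp add: Lip1_def seq_dist_def)

lemma Lip1_lift:
  assumes f: "Lip1 n f" and "n \<le> N"
  shows "Lip1 N (\<lambda>\<eta>. f (take n \<eta>) @ replicate (N - n) False)"
proof -
  have f_bits: "f (take n \<eta>) \<in> bits n" if "\<eta> \<in> bits N" for \<eta>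
    using f that \<open>n \<le> N\<close> by (simp add: Lip1_def bits_def)
  show ?thesis
    unfolding Lip1_def
  proof (intro conjI ballI)
    fix \<eta> assume "\<eta> \<in> bits N"
    then show "f (take n \<eta>) @ replicate (N - n) False \<in> bits N"
      using f_bits \<open>n \<le> N\<close> by (simp add: bits_def)
  next
    fix \<eta> \<eta>' assume \<eta>: "\<eta> \<in> bits N" and \<eta>': "\<eta>' \<in> bits N"
    have "seq_dist (f (take n \<eta>) @ replicate (N - n) False) (f (take n \<eta>') @ replicate (N - n) False)
        = seq_dist (f (take n \<eta>)) (f (take n \<eta>'))"
      using f_bits[OF \<eta>] f_bits[OF \<eta>'] by (simp add: seq_dist_append_same_length bits_def)
    also have "\<dots> \<le> seq_dist (take n \<eta>) (take n \<eta>')"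
      using f \<eta> \<eta>' \<open>n \<le> N\<close> by (simp add: Lip1_def bits_def)
    also have "\<dots> \<le> seq_dist \<eta> \<eta>'"
      by (rule seq_dist_take_le)
    finally show "seq_dist (f (take n \<eta>) @ replicate (N - n) False)
        (f (take n \<eta>') @ replicate (N - n) False) \<le> seq_dist \<eta> \<eta>'" .
  qed
qed

lemma cond_le_trans:
  assumes pq: "cond_le p q" and qr: "cond_le q r"
  shows "cond_le p r"
proof -
  have le: "cn p \<le> cn q" "cs p \<subseteq> cs q" "cv p \<subseteq> cv q"
    using pq by (auto simp: cond_le_def)
  have f: "take (cn p) (cf r i \<eta>) = cf p i (take (cn p) \<eta>)"
    if i: "i \<in> cs p" and \<eta>: "\<eta> \<in> bits (cn r)" for i \<eta>
  proof -
    have \<eta>q: "take (cn q) \<eta> \<in> bits (cn q)"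
      using qr \<eta> by (auto simp: cond_le_def bits_def)
    have "take (cn p) (cf r i \<eta>) = take (cn p) (take (cn q) (cf r i \<eta>))"
      using le by (simp add: min.absorb1)
    also have "\<dots> = take (cn p) (cf q i (take (cn q) \<eta>))"
      using qr i \<eta> le by (simp add: cond_le_def subset_iff)
    also have "\<dots> = cf p i (take (cn p) \<eta>)"
      using pq i \<eta>q le by (simp add: cond_le_def min.absorb1)
    finally show ?thesis .
  qed
  have \<gamma>: "take (cn p) (cgamma r \<alpha>) = cgamma p \<alpha>" if "\<alpha> \<in> cv p" for \<alpha>
  proof -
    have "cgamma q \<alpha> = take (cn q) (cgamma r \<alpha>)" "cgamma p \<alpha> = take (cn p) (cgamma q \<alpha>)"
      using pq qr that le by (auto simp: cond_le_def)
    then show ?thesis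
      using le by (simp add: min.absorb1)
  qed
  have \<rho>: "crho r {\<alpha>, \<beta>} = crho p {\<alpha>, \<beta>}" if "\<alpha> \<in> cv p" "\<beta> \<in> cv p" "\<alpha> \<noteq> \<beta>" for \<alpha> \<beta>
    using pq qr that le by (simp add: cond_le_def subset_iff)
  show ?thesis
    using le qr f \<gamma> \<rho> unfolding cond_le_def by auto
qed

lemma cond_le_extension:
  assumes "isCond p" and "cn q = cn p" and "cs p \<subseteq> cs q" and "cv p \<subseteq> cv q"
    and "\<forall>i\<in>cs p. cf q i = cf p i" and "\<forall>\<alpha>\<in>cv p. cgamma q \<alpha> = cgamma p \<alpha>"
    and "\<forall>\<alpha>\<in>cv p. \<forall>\<beta>\<in>cv p. \<alpha> \<noteq> \<beta> \<longrightarrow> crho q {\<alpha>, \<beta>} = crho p {\<alpha>, \<beta>}"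
  shows "cond_le p q"
  using assms unfolding isCond_def cond_le_def Lip1_def bits_def by auto

lemma cond_le_refl: "isCond p \<Longrightarrow> cond_le p p"
  by (rule cond_le_extension) auto

definition cond_lift :: "'a cond \<Rightarrow> nat \<Rightarrow> 'a cond" where
  "cond_lift p N = p\<lparr>cn := N,
     cf := \<lambda>i \<eta>. cf p i (take (cn p) \<eta>) @ replicate (N - cn p) False,
     cgamma := \<lambda>\<alpha>. cgamma p \<alpha> @ replicate (N - cn p) False\<rparr>"

lemma cond_lift_simps [simp]:
  "cn (cond_lift p N) = N" "cs (cond_lift p N) = cs p" "cv (cond_lift p N) = cv p"
  "crho (cond_lift p N) = crho p"
  "cgamma (cond_lift p N) \<alpha> = cgamma p \<alpha> @ replicate (N - cn p) False"
  by (simp_all add: cond_lift_def)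

lemma isCond_cond_lift:
  assumes p: "isCond p" and "cn p \<le> N"
  shows "isCond (cond_lift p N)"
  unfolding isCond_def
proof (intro conjI)
  show "\<forall>i\<in>cs (cond_lift p N). Lip1 (cn (cond_lift p N)) (cf (cond_lift p N) i)"
    using p \<open>cn p \<le> N\<close> by (auto simp: cond_lift_def isCond_def intro: Lip1_lift)
  show "\<forall>\<alpha>\<in>cv (cond_lift p N). \<forall>\<beta>\<in>cv (cond_lift p N). \<alpha> < \<beta> \<longrightarrow>
      cgamma (cond_lift p N) \<alpha> = cf (cond_lift p N) (crho (cond_lift p N) {\<alpha>, \<beta>}) (cgamma (cond_lift p N) \<beta>)"
    using p by (auto simp: cond_lift_def isCond_def bits_def)
qed (use p \<open>cn p \<le> N\<close> in \<open>auto simp: cond_lift_def isCond_def bits_def inj_on_def\<close>)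

lemma cond_le_cond_lift:
  assumes p: "isCond p" and "cn p \<le> N"
  shows "cond_le p (cond_lift p N)"
  using assms unfolding cond_le_def cond_lift_def isCond_def Lip1_def bits_def
  by (auto simp: min.absorb1)

definition cond_add_colours :: "'a cond \<Rightarrow> nat set \<Rightarrow> (nat \<Rightarrow> bool list \<Rightarrow> bool list) \<Rightarrow> 'a cond" where
  "cond_add_colours p J F = p\<lparr>cs := cs p \<union> J, cf := \<lambda>i. if i \<in> cs p then cf p i else F i\<rparr>"

lemma cond_add_colours_simps [simp]:
  "cn (cond_add_colours p J F) = cn p" "cs (cond_add_colours p J F) = cs p \<union> J"
  "cv (cond_add_colours p J F) = cv p" "crho (cond_add_colours p J F) = crho p"
  "cgamma (cond_add_colours p J F) = cgamma p"
  "cf (cond_add_colours p J F) i = (if i \<in> cs p then cf p i else F i)"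
  by (simp_all add: cond_add_colours_def)

lemma isCond_cond_add_colours:
  assumes "isCond p" and "finite J" and "\<forall>j\<in>J. Lip1 (cn p) (F j)"
  shows "isCond (cond_add_colours p J F)"
  using assms unfolding isCond_def cond_add_colours_def by auto

lemma cond_le_cond_add_colours: "isCond p \<Longrightarrow> cond_le p (cond_add_colours p J F)"
  by (rule cond_le_extension) (auto simp: cond_add_colours_def)

definition cond_add_point :: "'a cond \<Rightarrow> 'a \<Rightarrow> bool list \<Rightarrow> ('a \<Rightarrow> nat) \<Rightarrow> 'a cond" where
  "cond_add_point p \<xi> c r = p\<lparr>cv := insert \<xi> (cv p), cgamma := (cgamma p)(\<xi> := c),
     crho := \<lambda>X. if \<xi> \<in> X then r (the_elem (X - {\<xi>})) else crho p X\<rparr>"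

lemma cond_add_point_simps [simp]:
  "cn (cond_add_point p \<xi> c r) = cn p" "cs (cond_add_point p \<xi> c r) = cs p"
  "cv (cond_add_point p \<xi> c r) = insert \<xi> (cv p)" "cf (cond_add_point p \<xi> c r) = cf p"
  "cgamma (cond_add_point p \<xi> c r) = (cgamma p)(\<xi> := c)"
  by (simp_all add: cond_add_point_def)

lemma crho_cond_add_point:
  assumes "\<xi> \<notin> cv p" and "\<alpha> \<in> cv p"
  shows "crho (cond_add_point p \<xi> c r) {\<alpha>, \<xi>} = r \<alpha>"
    and "crho (cond_add_point p \<xi> c r) {\<xi>, \<alpha>} = r \<alpha>"
    and "\<beta> \<in> cv p \<Longrightarrow> crho (cond_add_point p \<xi> c r) {\<alpha>, \<beta>} = crho p {\<alpha>, \<beta>}"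
  using assms by (auto simp: cond_add_point_def insert_Diff_if)

lemma cond_add_point_distinct_colours:
  fixes p :: "('a::linorder) cond"
  assumes p: "isCond p" and \<xi>: "\<xi> \<notin> cv p" and r: "inj_on r (cv p)"
    and r_fresh: "\<forall>\<alpha>\<in>cv p. \<forall>\<beta>\<in>cv p. \<alpha> \<noteq> \<beta> \<longrightarrow> crho p {\<alpha>, \<beta>} \<noteq> r \<beta>"
    and mem: "\<alpha> \<in> insert \<xi> (cv p)" "\<alpha>' \<in> insert \<xi> (cv p)" "\<beta> \<in> insert \<xi> (cv p)"
    and "\<alpha> < \<alpha>'" "\<alpha>' < \<beta>"
  shows "crho (cond_add_point p \<xi> c r) {\<alpha>, \<beta>} \<noteq> crho (cond_add_point p \<xi> c r) {\<alpha>', \<beta>}"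
proof -
  consider "\<beta> = \<xi>" | "\<alpha> = \<xi>" | "\<alpha>' = \<xi>" | "\<xi> \<notin> {\<alpha>, \<alpha>', \<beta>}"
    by auto
  then show ?thesis
  proof cases
    case 1
    then have "\<alpha> \<in> cv p" "\<alpha>' \<in> cv p" "\<alpha> \<noteq> \<alpha>'"
      using mem \<open>\<alpha> < \<alpha>'\<close> \<open>\<alpha>' < \<beta>\<close> by auto
    then show ?thesis
      using 1 \<xi> r by (simp add: crho_cond_add_point inj_on_eq_iff)
  next
    case 2
    then have "\<alpha>' \<in> cv p" "\<beta> \<in> cv p" "\<alpha>' \<noteq> \<beta>"
      using mem \<open>\<alpha> < \<alpha>'\<close> \<open>\<alpha>' < \<beta>\<close> by auto
    then show ?thesis
      using 2 \<xi> r_fresh by (metis crho_cond_add_point(2,3))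
  next
    case 3
    then have "\<alpha> \<in> cv p" "\<beta> \<in> cv p" "\<alpha> \<noteq> \<beta>"
      using mem \<open>\<alpha> < \<alpha>'\<close> \<open>\<alpha>' < \<beta>\<close> by auto
    then show ?thesis
      using 3 \<xi> r_fresh by (simp add: crho_cond_add_point)
  next
    case 4
    then have "\<alpha> \<in> cv p" "\<alpha>' \<in> cv p" "\<beta> \<in> cv p"
      using mem by auto
    then show ?thesis
      using p \<xi> \<open>\<alpha> < \<alpha>'\<close> \<open>\<alpha>' < \<beta>\<close> by (simp add: crho_cond_add_point isCond_def)
  qed
qed

lemma cond_add_point_coherent:
  fixes p :: "('a::linorder) cond"
  assumes p: "isCond p" and \<xi>: "\<xi> \<notin> cv p"
    and below: "\<forall>\<alpha>\<in>cv p. \<alpha> < \<xi> \<longrightarrow> cgamma p \<alpha> = cf p (r \<alpha>) c"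
    and above: "\<forall>\<beta>\<in>cv p. \<xi> < \<beta> \<longrightarrow> c = cf p (r \<beta>) (cgamma p \<beta>)"
    and mem: "\<alpha> \<in> insert \<xi> (cv p)" "\<beta> \<in> insert \<xi> (cv p)" and "\<alpha> < \<beta>"
  shows "cgamma (cond_add_point p \<xi> c r) \<alpha>
    = cf p (crho (cond_add_point p \<xi> c r) {\<alpha>, \<beta>}) (cgamma (cond_add_point p \<xi> c r) \<beta>)"
proof -
  consider "\<beta> = \<xi>" | "\<alpha> = \<xi>" | "\<xi> \<notin> {\<alpha>, \<beta>}"
    by auto
  then show ?thesis
  proof cases
    case 1
    then have "\<alpha> \<in> cv p" "\<alpha> < \<xi>"
      using mem \<open>\<alpha> < \<beta>\<close> by auto
    then show ?thesis
      using 1 below \<xi> by (auto simp: crho_cond_add_point)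
  next
    case 2
    then have "\<beta> \<in> cv p" "\<xi> < \<beta>"
      using mem \<open>\<alpha> < \<beta>\<close> by auto
    then have "c = cf p (r \<beta>) (cgamma p \<beta>)" "\<beta> \<noteq> \<xi>"
      using above by auto
    then show ?thesis
      using 2 crho_cond_add_point(2)[OF \<xi> \<open>\<beta> \<in> cv p\<close>] by simp
  next
    case 3
    then have "\<alpha> \<in> cv p" "\<beta> \<in> cv p" "\<alpha> \<noteq> \<xi>" "\<beta> \<noteq> \<xi>"
      using mem by auto
    then show ?thesis
      using p \<xi> \<open>\<alpha> < \<beta>\<close> by (simp add: crho_cond_add_point isCond_def)
  qed
qed

lemma isCond_cond_add_point:
  fixes p :: "('a::linorder) cond"
  assumes p: "isCond p" and \<xi>: "\<xi> \<notin> cv p"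
    and c: "c \<in> bits (cn p)" "c \<notin> cgamma p ` cv p"
    and r: "inj_on r (cv p)" "r ` cv p \<subseteq> cs p"
    and r_fresh: "\<forall>\<alpha>\<in>cv p. \<forall>\<beta>\<in>cv p. \<alpha> \<noteq> \<beta> \<longrightarrow> crho p {\<alpha>, \<beta>} \<noteq> r \<beta>"
    and below: "\<forall>\<alpha>\<in>cv p. \<alpha> < \<xi> \<longrightarrow> cgamma p \<alpha> = cf p (r \<alpha>) c"
    and above: "\<forall>\<beta>\<in>cv p. \<xi> < \<beta> \<longrightarrow> c = cf p (r \<beta>) (cgamma p \<beta>)"
  shows "isCond (cond_add_point p \<xi> c r)"
proof -
  let ?q = "cond_add_point p \<xi> c r"
  have colours: "crho ?q {\<alpha>, \<beta>} \<in> cs p"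
    if "\<alpha> \<in> insert \<xi> (cv p)" "\<beta> \<in> insert \<xi> (cv p)" "\<alpha> \<noteq> \<beta>" for \<alpha> \<beta>
    using that p r(2) \<xi> by (auto simp: crho_cond_add_point isCond_def)
  have "cgamma ?q \<alpha> = cgamma p \<alpha>" if "\<alpha> \<in> cv p" for \<alpha>
    using that \<xi> by auto
  then have "inj_on (cgamma ?q) (cv p)" "cgamma ?q ` cv p = cgamma p ` cv p"
    using p unfolding isCond_def by (auto cong: inj_on_cong)
  then have inj: "inj_on (cgamma ?q) (insert \<xi> (cv p))"
    using c(2) \<xi> by simp
  show ?thesis
    unfolding isCond_def cond_add_point_simps
  proof (intro conjI ballI impI)
    fix \<alpha> \<alpha>' \<beta> assume "\<alpha> \<in> insert \<xi> (cv p)" "\<alpha>' \<in> insert \<xi> (cv p)" "\<beta> \<in> insert \<xi> (cv p)"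
      and "\<alpha> < \<alpha>' \<and> \<alpha>' < \<beta>"
    then show "crho ?q {\<alpha>, \<beta>} \<noteq> crho ?q {\<alpha>', \<beta>}"
      using cond_add_point_distinct_colours[OF p \<xi> r(1) r_fresh] by blast
  next
    fix \<alpha> \<beta> assume "\<alpha> \<in> insert \<xi> (cv p)" "\<beta> \<in> insert \<xi> (cv p)" "\<alpha> < \<beta>"
    then show "((cgamma p)(\<xi> := c)) \<alpha> = cf p (crho ?q {\<alpha>, \<beta>}) (((cgamma p)(\<xi> := c)) \<beta>)"
      using cond_add_point_coherent[OF p \<xi> below above] by simp
  qed (use p c(1) colours inj in \<open>auto simp: isCond_def\<close>)
qed

lemma cond_le_cond_add_point:
  "isCond p \<Longrightarrow> \<xi> \<notin> cv p \<Longrightarrow> cond_le p (cond_add_point p \<xi> c r)"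
  by (rule cond_le_extension) (auto simp: crho_cond_add_point)

lemma dense_Dset: "dense_in_P (Dset k :: ('a::linorder) cond set)"
  unfolding dense_in_P_def
proof (intro conjI ballI)
  fix p :: "'a cond"
  assume "p \<in> Pforce"
  then have p: "isCond p"
    by (simp add: Pforce_def)
  define N where "N = cn p + k"
  define q where "q = cond_add_colours (cond_lift p N) {k} (\<lambda>_ _. replicate N False)"
  have lift: "isCond (cond_lift p N)" "cond_le p (cond_lift p N)"
    using p by (simp_all add: N_def isCond_cond_lift cond_le_cond_lift)
  have "isCond q"
    unfolding q_def using lift(1) by (intro isCond_cond_add_colours) (auto intro: Lip1_const simp: bits_def)
  moreover have "cond_le p q"
    unfolding q_def using lift by (blast intro: cond_le_trans cond_le_cond_add_colours)
  ultimately show "\<exists>q\<in>Dset k. cond_le p q"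
    by (auto simp: Dset_def Pforce_def q_def N_def)
qed (auto simp: Dset_def)

lemma exists_cond_le_with_coded_point:
  fixes p :: "('a::linorder) cond"
  assumes p: "isCond p" and \<xi>: "\<xi> \<notin> cv p"
    and c: "c \<in> bits (cn p)" "c \<notin> cgamma p ` cv p"
  shows "\<exists>q. isCond q \<and> \<xi> \<in> cv q \<and> cond_le p q"
proof -
  have "finite (cs p)"
    using p by (simp add: isCond_def)
  then obtain m where m: "cs p \<subseteq> {..<m}"
    using finite_nat_bounded by blast
  define idx where "idx \<alpha> = m + to_nat_on (cv p) \<alpha>" for \<alpha>
  define target where "target \<alpha> = (if \<alpha> < \<xi> then cgamma p \<alpha> else c)" for \<alpha>
  define p' where "p' = cond_add_colours p (idx ` cv p) (\<lambda>i _. target (inv_into (cv p) idx i))"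
  have "countable (cv p)"
    using p by (simp add: isCond_def countable_finite)
  then have idx_inj: "inj_on idx (cv p)"
    by (auto simp: idx_def inj_on_def dest: inj_on_to_nat_on[THEN inj_onD])
  have idx_fresh: "idx \<alpha> \<notin> cs p" for \<alpha>
    using m by (auto simp: idx_def)
  have target_bits: "target \<alpha> \<in> bits (cn p)" if "\<alpha> \<in> cv p" for \<alpha>
    using p that c(1) by (auto simp: target_def isCond_def)
  have p': "isCond p'" "cond_le p p'"
    unfolding p'_def using p
    by (auto intro!: isCond_cond_add_colours cond_le_cond_add_colours Lip1_const target_bits
        inv_into_into simp: isCond_def)
  have p'_simps: "cn p' = cn p" "cs p' = cs p \<union> idx ` cv p" "cv p' = cv p" "crho p' = crho p"
    "cgamma p' = cgamma p"
    by (simp_all add: p'_def)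
  have cf_idx: "cf p' (idx \<alpha>) = (\<lambda>_. target \<alpha>)" if "\<alpha> \<in> cv p" for \<alpha>
    using idx_fresh[of \<alpha>] idx_inj that by (simp add: p'_def)
  have "isCond (cond_add_point p' \<xi> c idx)"
  proof (rule isCond_cond_add_point)
    show "isCond p'" "\<xi> \<notin> cv p'" "c \<in> bits (cn p')" "c \<notin> cgamma p' ` cv p'"
      "inj_on idx (cv p')" "idx ` cv p' \<subseteq> cs p'"
      using p'(1) \<xi> c idx_inj by (simp_all add: p'_simps)
    show "\<forall>\<alpha>\<in>cv p'. \<forall>\<beta>\<in>cv p'. \<alpha> \<noteq> \<beta> \<longrightarrow> crho p' {\<alpha>, \<beta>} \<noteq> idx \<beta>"
      using p idx_fresh unfolding isCond_def p'_simps by metis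
    show "\<forall>\<alpha>\<in>cv p'. \<alpha> < \<xi> \<longrightarrow> cgamma p' \<alpha> = cf p' (idx \<alpha>) c"
      by (simp add: cf_idx target_def p'_simps)
    show "\<forall>\<beta>\<in>cv p'. \<xi> < \<beta> \<longrightarrow> c = cf p' (idx \<beta>) (cgamma p' \<beta>)"
      by (auto simp: cf_idx target_def p'_simps)
  qed
  moreover have "cond_le p (cond_add_point p' \<xi> c idx)"
    using p'(2) cond_le_cond_add_point[OF p'(1), of \<xi> c idx] \<xi>
    unfolding p'_simps by (blast intro: cond_le_trans)
  ultimately show ?thesis
    by auto
qed

lemma exists_cond_le_with_point:
  fixes p :: "('a::linorder) cond"
  assumes p: "isCond p" and \<xi>: "\<xi> \<notin> cv p"
  shows "\<exists>q. isCond q \<and> \<xi> \<in> cv q \<and> cond_le p q"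
proof -
  define c where "c = replicate (cn p) False @ [True]"
  have lift: "isCond (cond_lift p (Suc (cn p)))" "cond_le p (cond_lift p (Suc (cn p)))"
    using p by (simp_all add: isCond_cond_lift cond_le_cond_lift)
  have "c \<in> bits (Suc (cn p))" "c \<notin> cgamma (cond_lift p (Suc (cn p))) ` cv p"
    by (auto simp: c_def bits_def)
  then show ?thesis
    using exists_cond_le_with_coded_point[OF lift(1), of \<xi> c] lift(2) \<xi>
    by (auto intro: cond_le_trans)
qed

lemma dense_Eset: "dense_in_P (Eset \<xi> :: ('a::linorder) cond set)"
  unfolding dense_in_P_def
proof (intro conjI ballI)
  fix p :: "'a cond"
  assume "p \<in> Pforce"
  then have p: "isCond p"
    by (simp add: Pforce_def)
  show "\<exists>q\<in>Eset \<xi>. cond_le p q"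
  proof (cases "\<xi> \<in> cv p")
    case True
    with p show ?thesis
      by (auto simp: Eset_def Pforce_def intro: cond_le_refl)
  next
    case False
    with p show ?thesis
      by (auto simp: Eset_def Pforce_def dest: exists_cond_le_with_point)
  qed
qed (auto simp: Eset_def)

theorem lemma3p3:
  fixes k :: nat and \<xi> :: "'a::wellorder"
  assumes omega1_init: "\<And>x::'a. countable {y. y < x}"
    and omega1_unc: "\<not> countable (UNIV :: 'a set)"
  shows "dense_in_P (Dset k :: 'a cond set) \<and> dense_in_P (Eset \<xi>)"
  using dense_Dset dense_Eset by blast

end
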